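(* If $e$ is an NLPCF program (i.e. $e\in\mathcal{P}\!\mathit{rog}^{NL}(\tau)$ for some type $\tau$) and $e\not\rightsquigarrow$, then $e$ is in canonical form.
   Context: NLPCF is LPCF extended with non-determinism. Types: $\tau ::= \mathsf{Nat}\mid\mathsf{Bool}\mid \tau\,\&\,\tau' \mid \tau\otimes\tau' \mid \tau\multimap\tau' \mid \tau\to\tau'\mid\mathsf{T}\tau$. Terms: $e ::= x \mid \mathtt{0},\mathtt{1},\dots \mid \mathtt{succ}\mid\mathtt{pred}\mid\mathtt{iszero} \mid \lambda x.e \mid e\,e' \mid \mathtt{true}\mid\mathtt{false} \mid \mathtt{if}\ e_1\ \mathtt{then}\ e_2\ \mathtt{else}\ e_3 \mid \langle e_1,e_2\rangle \mid \mathtt{proj}_i(e) \mid \mathtt{fix}_\tau \mid e_1\otimes e_2 \mid \mathtt{let}\ x\otimes y = e\ \mathtt{in}\ e' \mid \mathtt{val}(e)\mid \mathtt{bind}\ x\Leftarrow e\ \mathtt{in}\ e'\mid e\sqcap e'$, up to $\alpha$-equivalence ($\lambda$, $\mathtt{let}$, $\mathtt{bind}$ bind variables), with capture-avoiding substitution. Typing judgements $\Gamma;\Delta\vdash e:\tau$ ($\Gamma$ non-linear, $\Delta$ linear environments, disjoint domains; $\Delta,\Delta'$ disjoint union): $\Gamma;\emptyset\vdash x:\tau$ if $x:\tau\in\Gamma$; $\Gamma;x:\tau\vdash x:\tau$ if $x\notin\Gamma$; $\Gamma;\emptyset\vdash\mathtt{fix}_\tau:(\tau\to\tau)\to\tau$;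 numerals $:\mathsf{Nat}$, $\mathtt{true},\mathtt{false}:\mathsf{Bool}$, $\mathtt{succ},\mathtt{pred}:\mathsf{Nat}\multimap\mathsf{Nat}$, $\mathtt{iszero}:\mathsf{Nat}\multimap\mathsf{Bool}$ (all with empty $\Delta$); from $\Gamma;\Delta\vdash e_1:\mathsf{Bool}$, $\Gamma;\Delta'\vdash e_2:\tau$, $\Gamma;\Delta'\vdash e_3:\tau$ infer $\Gamma;\Delta,\Delta'\vdash\mathtt{if}\ e_1\ \mathtt{then}\ e_2\ \mathtt{else}\ e_3:\tau$; from $\Gamma;\Delta\vdash e_i:\tau_i$ infer $\Gamma;\Delta\vdash\langle e_1,e_2\rangle:\tau_1\&\tau_2$; from $\Gamma;\Delta\vdash e:\tau_1\&\tau_2$ infer $\Gamma;\Delta\vdash\mathtt{proj}_i(e):\tau_i$; from $\Gamma;\Delta_i\vdash e_i:\tau_i$ infer $\Gamma;\Delta_1,\Delta_2\vdash e_1\otimes e_2:\tau_1\otimes\tau_2$; from $\Gamma;\Delta,x:\tau_1,y:\tau_2\vdash e:\tau$ and $\Gamma;\Delta'\vdash e':\tau_1\otimes\tau_2$ infer $\Gamma;\Delta,\Delta'\vdash\mathtt{let}\ x\otimes y=e'\ \mathtt{in}\ e:\tau$; from $\Gamma,x:\tau;\Delta\vdash e:\tau'$ infer $\Gamma;\Delta\vdash\lambda x.e:\tau\to\tau'$; from $\Gamma;\Delta\vdash e:\tau'\to\tau$, $\Gamma;\emptyset\vdash e':\tau'$ infer $\Gamma;\Delta\vdash e\,e':\tau$;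 from $\Gamma;\Delta,x:\tau\vdash e:\tau'$ infer $\Gamma;\Delta\vdash\lambda x.e:\tau\multimap\tau'$; from $\Gamma;\Delta\vdash e:\tau'\multimap\tau$, $\Gamma;\Delta'\vdash e':\tau'$ infer $\Gamma;\Delta,\Delta'\vdash e\,e':\tau$; from $\Gamma;\Delta\vdash e:\tau$ infer $\Gamma;\Delta\vdash\mathtt{val}(e):\mathsf{T}\tau$; from $\Gamma;\emptyset\vdash e_1:\mathsf{T}\tau_1$ and $\Gamma,x:\tau_1;\Delta\vdash e_2:\mathsf{T}\tau_2$ infer $\Gamma;\Delta\vdash\mathtt{bind}\ x\Leftarrow e_1\ \mathtt{in}\ e_2:\mathsf{T}\tau_2$; from $\Gamma;\Delta\vdash e_1:\mathsf{T}\tau_1$ and $\Gamma;\Delta',x:\tau_1\vdash e_2:\mathsf{T}\tau_2$ infer $\Gamma;\Delta,\Delta'\vdash\mathtt{bind}\ x\Leftarrow e_1\ \mathtt{in}\ e_2:\mathsf{T}\tau_2$; from $\Gamma;\Delta\vdash e_i:\mathsf{T}\tau$ ($i=1,2$) infer $\Gamma;\Delta\vdash e_1\sqcap e_2:\mathsf{T}\tau$. $\mathcal{P}\!\mathit{rog}^{NL}(\tau)=\{e\mid\emptyset;\emptyset\vdash e:\tau\}$. One-step reduction $\rightsquigarrow$: least relation containing $(\lambda x.e)e'\rightsquigarrow e[e'/x]$; $\mathtt{fix}_\tau\,e\rightsquigarrow e(\mathtt{fix}_\tau\,e)$; $\mathtt{succ}\,n\rightsquigarrow n+1$; $\mathtt{pred}\,0\rightsquigarrow0$;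 $\mathtt{pred}\,n\rightsquigarrow n-1$ ($n\ge1$); $\mathtt{iszero}\,0\rightsquigarrow\mathtt{true}$; $\mathtt{iszero}\,n\rightsquigarrow\mathtt{false}$ ($n\ge1$); $\mathtt{if}\ \mathtt{true}\ \mathtt{then}\ e_1\ \mathtt{else}\ e_2\rightsquigarrow e_1$; $\mathtt{if}\ \mathtt{false}\ \mathtt{then}\ e_1\ \mathtt{else}\ e_2\rightsquigarrow e_2$; $\mathtt{proj}_i\langle e_1,e_2\rangle\rightsquigarrow e_i$; $\mathtt{let}\ x\otimes y=e_1\otimes e_2\ \mathtt{in}\ e\rightsquigarrow e[e_1/x,e_2/y]$; $\mathtt{bind}\ x\Leftarrow\mathtt{val}(e')\ \mathtt{in}\ e\rightsquigarrow(\lambda x.e)e'$ when $e'\not\rightsquigarrow$; $e_1\sqcap e_2\rightsquigarrow e_i$ ($i=1,2$); closed under $\mathcal{E}[e_1]\rightsquigarrow\mathcal{E}[e_2]$ for evaluation contexts $\mathcal{E}::=[\,]\mid\mathtt{succ}(\mathcal{E})\mid\mathtt{pred}(\mathcal{E})\mid\mathtt{iszero}(\mathcal{E})\mid\mathcal{E}\,e\mid\mathtt{if}\ \mathcal{E}\ \mathtt{then}\ e_1\ \mathtt{else}\ e_2\mid\mathtt{proj}_i(\mathcal{E})\mid\mathtt{let}\ x\otimes y=\mathcal{E}\ \mathtt{in}\ e\mid\mathtt{bind}\ x\Leftarrow\mathcal{E}\ \mathtt{in}\ e\mid\mathtt{val}(\mathcal{E})$. Canonical forms: $\mathtt{succ},\mathtt{pred},\mathtt{iszero},\mathtt{true},\mathtt{false}$,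 numerals, $\mathtt{fix}_\tau$, $\langle e,e'\rangle$, $e\otimes e'$, $\lambda x.e$, and $\mathtt{val}(v)$ with $v\not\rightsquigarrow$. *)

theory Defs
  imports Main
begin

datatype ty = TNat | TBool | With ty ty | Tens ty ty | Lolli ty ty | Arr ty ty | TT ty

(* Binders: Lam binds index 0 in its body;
   LetT e b  is  let x (x) y = e in b, where in b index 1 is x and index 0 is y;
   Bind e1 e2 is bind x <= e1 in e2, where in e2 index 0 is x. *)
datatype tm =
    Var nat
  | Num nat
  | Succ | Pred | Iszero
  | Lam tm
  | App tm tm
  | Tt | Ff
  | If tm tm tm
  | Pair tm tm
  | Proj1 tm | Proj2 tm
  | Fix ty
  | Tensor tm tm
  | LetT tm tm
  | Val tm
  | Bind tm tm
  | Choice tm tm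

primrec lift :: "nat \<Rightarrow> tm \<Rightarrow> tm" where
  "lift k (Var n) = Var (if n < k then n else Suc n)"
| "lift k (Num n) = Num n"
| "lift k Succ = Succ"
| "lift k Pred = Pred"
| "lift k Iszero = Iszero"
| "lift k (Lam e) = Lam (lift (Suc k) e)"
| "lift k (App e1 e2) = App (lift k e1) (lift k e2)"
| "lift k Tt = Tt"
| "lift k Ff = Ff"
| "lift k (If e1 e2 e3) = If (lift k e1) (lift k e2) (lift k e3)"
| "lift k (Pair e1 e2) = Pair (lift k e1) (lift k e2)"
| "lift k (Proj1 e) = Proj1 (lift k e)"
| "lift k (Proj2 e) = Proj2 (lift k e)"
| "lift k (Fix t) = Fix t"
| "lift k (Tensor e1 e2) = Tensor (lift k e1) (lift k e2)"
| "lift k (LetT e1 e2) = LetT (lift k e1) (lift (Suc (Suc k)) e2)"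
| "lift k (Val e) = Val (lift k e)"
| "lift k (Bind e1 e2) = Bind (lift k e1) (lift (Suc k) e2)"
| "lift k (Choice e1 e2) = Choice (lift k e1) (lift k e2)"

definition up :: "(nat \<Rightarrow> tm) \<Rightarrow> nat \<Rightarrow> tm" where
  "up \<sigma> n = (case n of 0 \<Rightarrow> Var 0 | Suc m \<Rightarrow> lift 0 (\<sigma> m))"

primrec subst :: "(nat \<Rightarrow> tm) \<Rightarrow> tm \<Rightarrow> tm" where
  "subst \<sigma> (Var n) = \<sigma> n"
| "subst \<sigma> (Num n) = Num n"
| "subst \<sigma> Succ = Succ"
| "subst \<sigma> Pred = Pred"
| "subst \<sigma> Iszero = Iszero"
| "subst \<sigma> (Lam e) = Lam (subst (up \<sigma>) e)"
| "subst \<sigma> (App e1 e2) = App (subst \<sigma> e1) (subst \<sigma> e2)"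
| "subst \<sigma> Tt = Tt"
| "subst \<sigma> Ff = Ff"
| "subst \<sigma> (If e1 e2 e3) = If (subst \<sigma> e1) (subst \<sigma> e2) (subst \<sigma> e3)"
| "subst \<sigma> (Pair e1 e2) = Pair (subst \<sigma> e1) (subst \<sigma> e2)"
| "subst \<sigma> (Proj1 e) = Proj1 (subst \<sigma> e)"
| "subst \<sigma> (Proj2 e) = Proj2 (subst \<sigma> e)"
| "subst \<sigma> (Fix t) = Fix t"
| "subst \<sigma> (Tensor e1 e2) = Tensor (subst \<sigma> e1) (subst \<sigma> e2)"
| "subst \<sigma> (LetT e1 e2) = LetT (subst \<sigma> e1) (subst (up (up \<sigma>)) e2)"
| "subst \<sigma> (Val e) = Val (subst \<sigma> e)"
| "subst \<sigma> (Bind e1 e2) = Bind (subst \<sigma> e1) (subst (up \<sigma>) e2)"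
| "subst \<sigma> (Choice e1 e2) = Choice (subst \<sigma> e1) (subst \<sigma> e2)"

definition subst1 :: "tm \<Rightarrow> tm \<Rightarrow> tm" where
  "subst1 a e = subst (\<lambda>n. case n of 0 \<Rightarrow> a | Suc m \<Rightarrow> Var m) e"

definition subst2 :: "tm \<Rightarrow> tm \<Rightarrow> tm \<Rightarrow> tm" where
  "subst2 a b e = subst (\<lambda>n. case n of 0 \<Rightarrow> b | Suc 0 \<Rightarrow> a | Suc (Suc m) \<Rightarrow> Var m) e"

datatype mode = NL | Lin

text \<open>A combined environment: index i is either absent, in the non-linear
  environment Gamma (NL), or in the linear environment Delta (Lin).
  This builds in disjointness of the domains of Gamma and Delta.\<close>
type_synonym env = "nat \<Rightarrow> (mode \<times> ty) option"

definition lin_empty :: "env \<Rightarrow> bool" where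
  "lin_empty E \<longleftrightarrow> (\<forall>i t. E i \<noteq> Some (Lin, t))"

definition nl_part :: "env \<Rightarrow> env" where
  "nl_part E = (\<lambda>i. case E i of Some (NL, t) \<Rightarrow> Some (NL, t) | _ \<Rightarrow> None)"

definition split :: "env \<Rightarrow> env \<Rightarrow> env \<Rightarrow> bool" where
  "split E E1 E2 \<longleftrightarrow> (\<forall>i. case E i of
       None \<Rightarrow> E1 i = None \<and> E2 i = None
     | Some (NL, t) \<Rightarrow> E1 i = Some (NL, t) \<and> E2 i = Some (NL, t)
     | Some (Lin, t) \<Rightarrow> (E1 i = Some (Lin, t) \<and> E2 i = None) \<or> (E1 i = None \<and> E2 i = Some (Lin, t)))"

definition ext :: "env \<Rightarrow> mode \<Rightarrow> ty \<Rightarrow> env" where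
  "ext E m t = (\<lambda>i. case i of 0 \<Rightarrow> Some (m, t) | Suc j \<Rightarrow> E j)"

inductive has_type :: "env \<Rightarrow> tm \<Rightarrow> ty \<Rightarrow> bool" where
  T_var_nl: "E i = Some (NL, t) \<Longrightarrow> lin_empty E \<Longrightarrow> has_type E (Var i) t"
| T_var_lin: "E i = Some (Lin, t) \<Longrightarrow> (\<forall>j t'. j \<noteq> i \<longrightarrow> E j \<noteq> Some (Lin, t')) \<Longrightarrow> has_type E (Var i) t"
| T_fix: "lin_empty E \<Longrightarrow> has_type E (Fix t) (Arr (Arr t t) t)"
| T_num: "lin_empty E \<Longrightarrow> has_type E (Num n) TNat"
| T_tt: "lin_empty E \<Longrightarrow> has_type E Tt TBool"
| T_ff: "lin_empty E \<Longrightarrow> has_type E Ff TBool"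
| T_succ: "lin_empty E \<Longrightarrow> has_type E Succ (Lolli TNat TNat)"
| T_pred: "lin_empty E \<Longrightarrow> has_type E Pred (Lolli TNat TNat)"
| T_iszero: "lin_empty E \<Longrightarrow> has_type E Iszero (Lolli TNat TBool)"
| T_ite: "split E E1 E2 \<Longrightarrow> has_type E1 e1 TBool \<Longrightarrow> has_type E2 e2 t \<Longrightarrow> has_type E2 e3 t \<Longrightarrow> has_type E (If e1 e2 e3) t"
| T_pair: "has_type E e1 t1 \<Longrightarrow> has_type E e2 t2 \<Longrightarrow> has_type E (Pair e1 e2) (With t1 t2)"
| T_proj1: "has_type E e (With t1 t2) \<Longrightarrow> has_type E (Proj1 e) t1"
| T_proj2: "has_type E e (With t1 t2) \<Longrightarrow> has_type E (Proj2 e) t2"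
| T_tensor: "split E E1 E2 \<Longrightarrow> has_type E1 e1 t1 \<Longrightarrow> has_type E2 e2 t2 \<Longrightarrow> has_type E (Tensor e1 e2) (Tens t1 t2)"
| T_lett: "split E E1 E2 \<Longrightarrow> has_type (ext (ext E1 Lin t1) Lin t2) e t \<Longrightarrow> has_type E2 e' (Tens t1 t2)
         \<Longrightarrow> has_type E (LetT e' e) t"
| T_lam_nl: "has_type (ext E NL t) e t' \<Longrightarrow> has_type E (Lam e) (Arr t t')"
| T_app_nl: "has_type E e (Arr t' t) \<Longrightarrow> has_type (nl_part E) e' t' \<Longrightarrow> has_type E (App e e') t"
| T_lam_lin: "has_type (ext E Lin t) e t' \<Longrightarrow> has_type E (Lam e) (Lolli t t')"
| T_app_lin: "split E E1 E2 \<Longrightarrow> has_type E1 e (Lolli t' t) \<Longrightarrow> has_type E2 e' t' \<Longrightarrow> has_type E (App e e') t"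
| T_val: "has_type E e t \<Longrightarrow> has_type E (Val e) (TT t)"
| T_bind_nl: "has_type (nl_part E) e1 (TT t1) \<Longrightarrow> has_type (ext E NL t1) e2 (TT t2) \<Longrightarrow> has_type E (Bind e1 e2) (TT t2)"
| T_bind_lin: "split E E1 E2 \<Longrightarrow> has_type E1 e1 (TT t1) \<Longrightarrow> has_type (ext E2 Lin t1) e2 (TT t2)
         \<Longrightarrow> has_type E (Bind e1 e2) (TT t2)"
| T_choice: "has_type E e1 (TT t) \<Longrightarrow> has_type E e2 (TT t) \<Longrightarrow> has_type E (Choice e1 e2) (TT t)"

definition Prog :: "ty \<Rightarrow> tm set" where
  "Prog t = {e. has_type (\<lambda>_. None) e t}"

fun app_head :: "tm \<Rightarrow> tm \<Rightarrow> tm set" where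
  "app_head (Lam e) a = {subst1 a e}"
| "app_head (Fix t) a = {App a (App (Fix t) a)}"
| "app_head Succ (Num n) = {Num (Suc n)}"
| "app_head Pred (Num 0) = {Num 0}"
| "app_head Pred (Num (Suc n)) = {Num n}"
| "app_head Iszero (Num 0) = {Tt}"
| "app_head Iszero (Num (Suc n)) = {Ff}"
| "app_head _ _ = {}"

text \<open>It is defined by recursion on
  the size of e: each clause collects the basic rules applying at the root and
  the closure under the evaluation-context frames of the given shape
  (succ(E), pred(E), iszero(E), E e, if E .., proj_i(E), let .. = E in e,
  bind x <= E in e, val(E)). The side condition "e' does not reduce" of the
  bind rule refers to the strict subterm e'.\<close>
function red :: "tm \<Rightarrow> tm set" where
  "red (Var n) = {}"
| "red (Num n) = {}"
| "red Succ = {}"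
| "red Pred = {}"
| "red Iszero = {}"
| "red (Lam e) = {}"
| "red (App f a) = app_head f a \<union> (\<lambda>f'. App f' a) ` red f
      \<union> (if f = Succ \<or> f = Pred \<or> f = Iszero then App f ` red a else {})"
| "red Tt = {}"
| "red Ff = {}"
| "red (If c a b) = (if c = Tt then {a} else {}) \<union> (if c = Ff then {b} else {})
      \<union> (\<lambda>c'. If c' a b) ` red c"
| "red (Pair a b) = {}"
| "red (Proj1 e) = (case e of Pair a b \<Rightarrow> {a} | _ \<Rightarrow> {}) \<union> Proj1 ` red e"
| "red (Proj2 e) = (case e of Pair a b \<Rightarrow> {b} | _ \<Rightarrow> {}) \<union> Proj2 ` red e"
| "red (Fix t) = {}"
| "red (Tensor a b) = {}"
| "red (LetT e b) = (case e of Tensor x y \<Rightarrow> {subst2 x y b} | _ \<Rightarrow> {}) \<union> (\<lambda>e'. LetT e' b) ` red e"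
| "red (Val e) = Val ` red e"
| "red (Bind e1 e2) = (case e1 of Val v \<Rightarrow> (if red v = {} then {App (Lam e2) v} else {}) | _ \<Rightarrow> {})
      \<union> (\<lambda>e'. Bind e' e2) ` red e1"
| "red (Choice a b) = {a, b}"
  by pat_completeness auto
termination by size_change

definition step :: "tm \<Rightarrow> tm \<Rightarrow> bool" (infix "\<leadsto>" 50) where
  "e \<leadsto> e' \<longleftrightarrow> e' \<in> red e"

datatype ectx = Hole | CSucc ectx | CPred ectx | CIszero ectx | CApp ectx tm
  | CIf ectx tm tm | CProj1 ectx | CProj2 ectx | CLet ectx tm | CBind ectx tm | CVal ectx

primrec plug :: "ectx \<Rightarrow> tm \<Rightarrow> tm" where
  "plug Hole e = e"
| "plug (CSucc E) e = App Succ (plug E e)"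
| "plug (CPred E) e = App Pred (plug E e)"
| "plug (CIszero E) e = App Iszero (plug E e)"
| "plug (CApp E a) e = App (plug E e) a"
| "plug (CIf E a b) e = If (plug E e) a b"
| "plug (CProj1 E) e = Proj1 (plug E e)"
| "plug (CProj2 E) e = Proj2 (plug E e)"
| "plug (CLet E b) e = LetT (plug E e) b"
| "plug (CBind E b) e = Bind (plug E e) b"
| "plug (CVal E) e = Val (plug E e)"

lemma step_plug: "e1 \<leadsto> e2 \<Longrightarrow> plug E e1 \<leadsto> plug E e2"
  by (induction E) (auto simp: step_def)

definition canonical :: "tm \<Rightarrow> bool" where
  "canonical e \<longleftrightarrow> e = Succ \<or> e = Pred \<or> e = Iszero \<or> e = Tt \<or> e = Ff
     \<or> (\<exists>n. e = Num n) \<or> (\<exists>t. e = Fix t) \<or> (\<exists>a b. e = Pair a b)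
     \<or> (\<exists>a b. e = Tensor a b) \<or> (\<exists>b. e = Lam b)
     \<or> (\<exists>v. e = Val v \<and> \<not> (\<exists>v'. v \<leadsto> v'))"

end

theory Submission
  imports Defs
begin

text \<open>A closed
  irreducible term is either an introduction form, or an elimination form whose
  principal subterm is closed (splitting or restricting the empty environment gives
  the empty environment), irreducible, and hence canonical by induction; its type
  then fixes its shape to one on which a basic rule fires, a contradiction.\<close>

inductive_cases has_type_canonicalE:
  "has_type E (Num n) t" "has_type E Succ t" "has_type E Pred t" "has_type E Iszero t"
  "has_type E Tt t" "has_type E Ff t" "has_type E (Fix s) t" "has_type E (Pair a b) t"
  "has_type E (Tensor a b) t" "has_type E (Lam b) t" "has_type E (Val b) t"

lemma split_empty_env: "split (\<lambda>_. None) E1 E2 \<Longrightarrow> E1 = (\<lambda>_. None) \<and> E2 = (\<lambda>_. None)"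
  unfolding split_def by (auto simp: fun_eq_iff)

lemma nl_part_empty_env: "nl_part (\<lambda>_. None) = (\<lambda>_. None)"
  unfolding nl_part_def by simp

lemma canonical_TNat: "canonical e \<Longrightarrow> has_type E e TNat \<Longrightarrow> \<exists>n. e = Num n"
  unfolding canonical_def by (auto elim: has_type_canonicalE)

lemma canonical_TBool: "canonical e \<Longrightarrow> has_type E e TBool \<Longrightarrow> e = Tt \<or> e = Ff"
  unfolding canonical_def by (auto elim: has_type_canonicalE)

lemma canonical_With: "canonical e \<Longrightarrow> has_type E e (With t1 t2) \<Longrightarrow> \<exists>a b. e = Pair a b"
  unfolding canonical_def by (auto elim: has_type_canonicalE)

lemma canonical_Tens: "canonical e \<Longrightarrow> has_type E e (Tens t1 t2) \<Longrightarrow> \<exists>a b. e = Tensor a b"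
  unfolding canonical_def by (auto elim: has_type_canonicalE)

lemma canonical_TT: "canonical e \<Longrightarrow> has_type E e (TT t) \<Longrightarrow> \<exists>v. e = Val v \<and> red v = {}"
  unfolding canonical_def step_def by (auto elim: has_type_canonicalE)

lemma canonical_Arr:
  "canonical e \<Longrightarrow> has_type E e (Arr t1 t2) \<Longrightarrow> (\<exists>b. e = Lam b) \<or> (\<exists>s. e = Fix s)"
  unfolding canonical_def by (auto elim: has_type_canonicalE)

lemma canonical_Lolli:
  "canonical e \<Longrightarrow> has_type E e (Lolli t1 t2) \<Longrightarrow>
     (\<exists>b. e = Lam b) \<or> (t1 = TNat \<and> (e = Succ \<or> e = Pred \<or> e = Iszero))"
  unfolding canonical_def by (auto elim: has_type_canonicalE)

lemma app_head_Num_nonempty: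
  "f = Succ \<or> f = Pred \<or> f = Iszero \<Longrightarrow> app_head f (Num n) \<noteq> {}"
  by (cases n) auto

lemma irreducible_closed_canonical:
  "has_type E e t \<Longrightarrow> E = (\<lambda>_. None) \<Longrightarrow> red e = {} \<Longrightarrow> canonical e"
proof (induction rule: has_type.induct)
  case (T_ite E E1 E2 e1 e2 t e3)
  then show ?case using split_empty_env canonical_TBool by (auto split: if_splits)
next
  case (T_proj1 E e t1 t2)
  then show ?case using canonical_With by fastforce
next
  case (T_proj2 E e t1 t2)
  then show ?case using canonical_With by fastforce
next
  case (T_lett E E1 E2 t1 t2 e t e')
  then show ?case using split_empty_env canonical_Tens by fastforce
next
  case (T_app_nl E f t' t a)
  then show ?case using canonical_Arr by fastforce
next
  case (T_app_lin E E1 E2 f t' t a)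
  then have "E1 = (\<lambda>_. None)" "E2 = (\<lambda>_. None)"
    using split_empty_env by auto
  with T_app_lin have "canonical f"
    by (auto split: if_splits)
  with T_app_lin consider b where "f = Lam b" | "t' = TNat" "f = Succ \<or> f = Pred \<or> f = Iszero"
    using canonical_Lolli by blast
  then show ?case
  proof cases
    case 2
    with T_app_lin \<open>E2 = (\<lambda>_. None)\<close> have "canonical a" and a_Nat: "has_type E2 a TNat"
      by (auto split: if_splits)
    with a_Nat obtain n where "a = Num n" using canonical_TNat by blast
    with 2 T_app_lin.prems(2) show ?thesis using app_head_Num_nonempty by auto
  qed (use T_app_lin.prems in simp)
next
  case (T_val E e t)
  then show ?case by (auto simp: canonical_def step_def)
next
  case (T_bind_nl E e1 t1 e2 t2)
  then show ?case using canonical_TT nl_part_empty_env by (fastforce split: if_splits)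
next
  case (T_bind_lin E E1 E2 e1 t1 e2 t2)
  then show ?case using split_empty_env canonical_TT by (fastforce split: if_splits)
qed (auto simp: canonical_def)

theorem proposition4:
  fixes e :: tm and \<tau> :: ty
  assumes "e \<in> Prog \<tau>"
    and "\<not> (\<exists>e'. e \<leadsto> e')"
  shows "canonical e"
  using irreducible_closed_canonical assms unfolding Prog_def step_def by blast

end
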